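(* Let $m_1,r\ge1$ be integers, $p\in[1,\infty)$, $q\in[1,\infty]$, $c_o>0$, and let $g:\mathbb{R}^{m_1}\to\mathbb{R}$, $g(x)=\sum_{i=1}^r c_i\,\sigma(w_i^Tx+b_i)$, where $c_i,b_i\in\mathbb{R}$, $w_i\in\mathbb{R}^{m_1}$, $\sum_{i=1}^r|c_i|\le c_o$ and $\|(b_i,w_i^T)\|_1=1$ for each $i$. Then for every integer $k\in[1,r]$, $$g\in\mathcal{N}^{k,\mathbf d^k}_{p,q,\,wid_k^{1/q},\,2c_o},$$ where $wid_k=\lceil r/k\rceil+2m_1+3$ and $\mathbf d^k=(m_1,wid_k,\dots,wid_k,1)$ (with $d^k_0=m_1$, $d^k_i=wid_k$ for $i=1,\dots,k$, $d^k_{k+1}=1$).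
   Context: $\sigma(u)=\max(u,0)$, applied coordinatewise; $wid_k^{1/\infty}=1$. For a real $s_1\times s_2$ matrix $A=(a_{ij})$: $\|A\|_{p,q}=\big(\sum_{j=1}^{s_2}(\sum_{i=1}^{s_1}|a_{ij}|^p)^{q/p}\big)^{1/q}$ for $q<\infty$, $\|A\|_{p,\infty}=\max_j(\sum_{i}|a_{ij}|^p)^{1/p}$. An affine map $T:\mathbb{R}^{a}\to\mathbb{R}^{b}$, $T(u)=W^Tu+B$, is identified with $\tilde V\in\mathbb{R}^{(a+1)\times b}$ whose first row is $B^T$ and remaining rows form $W$; $\|T\|_{p,q}:=\|\tilde V\|_{p,q}$. For $k\ge0$, width vector $\mathbf d=(d_0,\dots,d_{k+1})$ and $c,c_o>0$, $\mathcal{N}^{k,\mathbf d}_{p,q,c,c_o}$ is the set of all $f=T_{k+1}\circ\sigma\circ T_k\circ\cdots\circ\sigma\circ T_1:\mathbb{R}^{d_0}\to\mathbb{R}^{d_{k+1}}$ with affine $T_i:\mathbb{R}^{d_{i-1}}\to\mathbb{R}^{d_i}$, $\|T_i\|_{p,q}=c$ for $i\le k$ and $\|T_{k+1}\|_{p,q}\le c_o$. *)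

theory Defs
  imports "HOL-Analysis.Analysis"
begin

text \<open>Vectors of R^n are represented as functions nat => real (only indices < n matter);
  an s1 x s2 matrix as nat => nat => real (only indices i < s1, j < s2 matter).\<close>

definition relu :: "real \<Rightarrow> real" where
  "relu u = max u 0"

definition pq_norm :: "real \<Rightarrow> ereal \<Rightarrow> nat \<Rightarrow> nat \<Rightarrow> (nat \<Rightarrow> nat \<Rightarrow> real) \<Rightarrow> real" where
  "pq_norm p q s1 s2 A =
     (if q = \<infinity> then Max ((\<lambda>j. (\<Sum>i<s1. \<bar>A i j\<bar> powr p) powr (1/p)) ` {..<s2})
      else (\<Sum>j<s2. ((\<Sum>i<s1. \<bar>A i j\<bar> powr p) powr (real_of_ereal q / p)))
             powr (1 / real_of_ereal q))"

text \<open>Affine map R^a -> R^b given by the (a+1) x b matrix V: first row is the bias B^T,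
  the remaining rows form W; T(u) = W^T u + B.\<close>
definition affine_map :: "(nat \<Rightarrow> nat \<Rightarrow> real) \<Rightarrow> nat \<Rightarrow> nat \<Rightarrow> (nat \<Rightarrow> real) \<Rightarrow> (nat \<Rightarrow> real)" where
  "affine_map V a b u = (\<lambda>j. if j < b then V 0 j + (\<Sum>i<a. V (Suc i) j * u i) else 0)"

fun hidden :: "(nat \<Rightarrow> nat \<Rightarrow> nat \<Rightarrow> real) \<Rightarrow> (nat \<Rightarrow> nat) \<Rightarrow> nat \<Rightarrow> (nat \<Rightarrow> real) \<Rightarrow> (nat \<Rightarrow> real)" where
  "hidden Ts d 0 x = x"
| "hidden Ts d (Suc i) x =
     (\<lambda>j. relu (affine_map (Ts (Suc i)) (d i) (d (Suc i)) (hidden Ts d i x) j))"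

definition net_eval :: "(nat \<Rightarrow> nat \<Rightarrow> nat \<Rightarrow> real) \<Rightarrow> (nat \<Rightarrow> nat) \<Rightarrow> nat \<Rightarrow> (nat \<Rightarrow> real) \<Rightarrow> (nat \<Rightarrow> real)" where
  "net_eval Ts d k x = affine_map (Ts (Suc k)) (d k) (d (Suc k)) (hidden Ts d k x)"

text \<open>The class N^{k,d}_{p,q,c,c_o}: functions R^(d 0) -> R^(d (k+1)) (compared on inputs
  supported in {..<d 0} and on output coordinates < d (k+1)).\<close>
definition NN :: "nat \<Rightarrow> (nat \<Rightarrow> nat) \<Rightarrow> real \<Rightarrow> ereal \<Rightarrow> real \<Rightarrow> real \<Rightarrow> ((nat \<Rightarrow> real) \<Rightarrow> (nat \<Rightarrow> real)) set" where
  "NN k d p q c co = {f. \<exists>Ts.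
      (\<forall>i\<in>{1..k}. pq_norm p q (d (i - 1) + 1) (d i) (Ts i) = c) \<and>
      pq_norm p q (d k + 1) (d (Suc k)) (Ts (Suc k)) \<le> co \<and>
      (\<forall>x. (\<forall>i\<ge>d 0. x i = 0) \<longrightarrow> (\<forall>j<d (Suc k). f x j = net_eval Ts d k x j))}"

definition pow_inv_q :: "real \<Rightarrow> ereal \<Rightarrow> real" where
  "pow_inv_q w q = (if q = \<infinity> then 1 else w powr (1 / real_of_ereal q))"

end

theory Submission
  imports Defs
begin

text \<open>Split the r neurons of g into k blocks of n = \<lceil>r / k\<rceil>. Hidden layer L evaluates the neurons
  of block L - 1, carries x forward as relu x and relu (- x), and keeps running weighted averages of
  the positive and of the negative part of g over the blocks already evaluated; the output layer
  recombines the last block with these two averages. Every hidden column has l1-norm at most 1,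
  hence p-norm at most 1, and since the last hidden neuron is identically zero its input row can pad
  every column to p-norm exactly 1, so every hidden matrix has (p,q)-norm W^(1/q). Each neuron is
  rescaled by a factor at most 2, which bounds the output weights by 2 \<Sum>|c i|.\<close>

lemma sum_abs_powr_le_powr_sum_abs:
  fixes a :: "'a \<Rightarrow> real"
  assumes "p \<ge> 1" "finite A"
  shows "(\<Sum>i\<in>A. \<bar>a i\<bar> powr p) \<le> (\<Sum>i\<in>A. \<bar>a i\<bar>) powr p"
proof (cases "(\<Sum>i\<in>A. \<bar>a i\<bar>) = 0")
  case True
  then have "\<forall>i\<in>A. a i = 0" using assms(2) by (simp add: sum_nonneg_eq_0_iff)
  then show ?thesis by simp
next
  case False
  define S where "S = (\<Sum>i\<in>A. \<bar>a i\<bar>)"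
  have "S > 0" using False unfolding S_def by (simp add: order_le_neq_trans sum_nonneg)
  have "\<bar>a i\<bar> powr p \<le> \<bar>a i\<bar> * S powr (p - 1)" if "i \<in> A" for i
  proof (cases "a i = 0")
    case False
    have "\<bar>a i\<bar> \<le> S" unfolding S_def using that assms(2) by (intro member_le_sum) auto
    then have "\<bar>a i\<bar> * \<bar>a i\<bar> powr (p - 1) \<le> \<bar>a i\<bar> * S powr (p - 1)"
      using assms(1) False by (intro mult_left_mono powr_mono2) auto
    then show ?thesis using False by (simp add: powr_mult_base)
  qed simp
  then have "(\<Sum>i\<in>A. \<bar>a i\<bar> powr p) \<le> (\<Sum>i\<in>A. \<bar>a i\<bar> * S powr (p - 1))"
    by (rule sum_mono)
  also have "\<dots> = S * S powr (p - 1)" by (simp add: S_def sum_distrib_right)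
  also have "\<dots> = S powr p" using \<open>S > 0\<close> by (simp add: powr_mult_base)
  finally show ?thesis by (simp add: S_def)
qed

lemma powr_sum_abs_powr_le_sum_abs:
  fixes a :: "'a \<Rightarrow> real"
  assumes "p \<ge> 1" "finite A"
  shows "(\<Sum>i\<in>A. \<bar>a i\<bar> powr p) powr (1 / p) \<le> (\<Sum>i\<in>A. \<bar>a i\<bar>)"
proof -
  have "(\<Sum>i\<in>A. \<bar>a i\<bar> powr p) powr (1 / p) \<le> ((\<Sum>i\<in>A. \<bar>a i\<bar>) powr p) powr (1 / p)"
    using assms by (intro powr_mono2 sum_abs_powr_le_powr_sum_abs) (auto intro: sum_nonneg)
  also have "\<dots> = (\<Sum>i\<in>A. \<bar>a i\<bar>)" using assms(1) by (simp add: powr_powr sum_nonneg)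
  finally show ?thesis .
qed

definition unit_pad :: "real \<Rightarrow> nat \<Rightarrow> (nat \<Rightarrow> real) \<Rightarrow> nat \<Rightarrow> real" where
  "unit_pad p R v = v(R := (1 - (\<Sum>i<R. \<bar>v i\<bar> powr p)) powr (1 / p))"

lemma sum_abs_powr_unit_pad:
  assumes "p \<ge> 1" and "(\<Sum>i<R. \<bar>v i\<bar>) \<le> 1"
  shows "(\<Sum>i<Suc R. \<bar>unit_pad p R v i\<bar> powr p) = 1"
proof -
  define S where "S = (\<Sum>i<R. \<bar>v i\<bar> powr p)"
  have "S \<le> (\<Sum>i<R. \<bar>v i\<bar>) powr p"
    unfolding S_def using assms(1) by (intro sum_abs_powr_le_powr_sum_abs) auto
  also have "\<dots> \<le> 1 powr p" using assms by (intro powr_mono2) (auto intro: sum_nonneg)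
  finally have "S \<le> 1" by simp
  then have "((1 - S) powr (1 / p)) powr p = 1 - S"
    using assms(1) by (cases "S = 1") (simp_all add: powr_powr)
  then show ?thesis by (simp add: unit_pad_def S_def)
qed

lemma sum_unit_pad_mult:
  "(\<Sum>i<Suc R. unit_pad p R v i * e i) = (\<Sum>i<R. v i * e i) + unit_pad p R v R * e R"
  by (simp add: unit_pad_def)

definition sparse_vector :: "(nat \<times> real) list \<Rightarrow> nat \<Rightarrow> real" where
  "sparse_vector es i = (\<Sum>(l, a) \<leftarrow> es. if l = i then a else 0)"

lemma sparse_vector_simps [simp]:
  "sparse_vector [] i = 0"
  "sparse_vector ((l, a) # es) i = (if l = i then a else 0) + sparse_vector es i"
  "sparse_vector (es @ fs) i = sparse_vector es i + sparse_vector fs i"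
  by (simp_all add: sparse_vector_def)

lemma sum_sparse_vector_mult:
  assumes "\<forall>(l, a) \<in> set es. l < R"
  shows "(\<Sum>i<R. sparse_vector es i * e i) = (\<Sum>(l, a) \<leftarrow> es. a * e l)"
  using assms
proof (induction es)
  case (Cons la es)
  obtain l a where la: "la = (l, a)" by fastforce
  have "(\<Sum>i<R. (if l = i then a else 0) * e i) = a * e l"
    using Cons.prems la by (simp add: if_distrib[where f = "\<lambda>z. z * _"] cong: if_cong)
  then show ?case using Cons by (simp add: la distrib_right sum.distrib)
qed simp

lemma sum_abs_sparse_vector_le: "(\<Sum>i<R. \<bar>sparse_vector es i\<bar>) \<le> (\<Sum>(l, a) \<leftarrow> es. \<bar>a\<bar>)"
proof (induction es)
  case (Cons la es)
  obtain l a where la: "la = (l, a)" by fastforce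
  have "(\<Sum>i<R. \<bar>sparse_vector (la # es) i\<bar>)
      \<le> (\<Sum>i<R. \<bar>if l = i then a else 0\<bar>) + (\<Sum>i<R. \<bar>sparse_vector es i\<bar>)"
    unfolding la sum.distrib[symmetric] by (intro sum_mono) simp
  also have "(\<Sum>i<R. \<bar>if l = i then a else 0\<bar>) \<le> \<bar>a\<bar>"
    by (cases "l < R") (simp_all add: if_distrib[where f = abs] sum.delta' cong: if_cong)
  finally show ?case using Cons.IH by (simp add: la)
qed simp

lemma sum_abs_powr_single_sparse_vector:
  "l < R \<Longrightarrow> p > 0 \<Longrightarrow> (\<Sum>i<R. \<bar>sparse_vector [(l, a)] i\<bar> powr p) = \<bar>a\<bar> powr p"
  by (simp add: if_distrib[where f = abs] if_distrib[where f = "\<lambda>z. z powr p"] sum.delta cong: if_cong)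

lemma sum_list_map_upt_eq_sum: "(\<Sum>t \<leftarrow> [0..<n]. f t) = (\<Sum>t<n. f t)"
  by (simp add: atLeast_upt sum_list_distinct_conv_sum_set)

lemma affine_map_eq_sum:
  "j < b \<Longrightarrow> affine_map V a b u j = (\<Sum>i<Suc a. V i j * case_nat 1 u i)"
  unfolding sum.lessThan_Suc_shift by (simp add: affine_map_def)

lemma pq_norm_unit_columns:
  assumes "\<And>j. j < W \<Longrightarrow> (\<Sum>i<R. \<bar>A i j\<bar> powr p) = 1" "W > 0"
  shows "pq_norm p q R W A = pow_inv_q (real W) q"
proof (cases "q = \<infinity>")
  case True
  have "(\<lambda>j. (\<Sum>i<R. \<bar>A i j\<bar> powr p) powr (1 / p)) ` {..<W} = {1}"
    using assms by auto
  then show ?thesis using True by (simp add: pq_norm_def pow_inv_q_def)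
qed (use assms in \<open>simp add: pq_norm_def pow_inv_q_def\<close>)

lemma pq_norm_single_column_le:
  assumes "p \<ge> 1" "q \<ge> 1"
  shows "pq_norm p q R 1 A \<le> (\<Sum>i<R. \<bar>A i 0\<bar>)"
proof -
  have p_norm: "(\<Sum>i<R. \<bar>A i 0\<bar> powr p) powr (1 / p) \<le> (\<Sum>i<R. \<bar>A i 0\<bar>)"
    using assms(1) by (intro powr_sum_abs_powr_le_sum_abs) auto
  show ?thesis
  proof (cases q)
    case (real q')
    then have "((\<Sum>i<R. \<bar>A i 0\<bar> powr p) powr (q' / p)) powr (1 / q')
        = (\<Sum>i<R. \<bar>A i 0\<bar> powr p) powr (1 / p)"
      using assms by (simp add: powr_powr sum_nonneg)
    then show ?thesis using p_norm real by (simp add: pq_norm_def)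
  qed (use p_norm assms in \<open>simp_all add: pq_norm_def lessThan_Suc\<close>)
qed

lemma sum_lessThan_add_split:
  fixes a N :: nat
  shows "(\<Sum>i<a + N. f i) = (\<Sum>i<a. f i) + (\<Sum>t<N. f (a + t) :: 'a :: comm_monoid_add)"
  by (induction N) (simp_all add: add_ac)

lemma sum_lessThan_if_less:
  fixes r N :: nat
  assumes "r \<le> N"
  shows "(\<Sum>i<N. if i < r then f i else 0) = (\<Sum>i<r. f i :: 'a :: comm_monoid_add)"
proof -
  have "{..<N} \<inter> {i. i < r} = {..<r}" using assms by auto
  then show ?thesis by (simp add: sum.If_cases)
qed

lemma relu_nonneg: "relu a \<ge> 0"
  by (simp add: relu_def)

lemma relu_of_nonneg: "a \<ge> 0 \<Longrightarrow> relu a = a"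
  by (simp add: relu_def)

lemma relu_divide: "s > 0 \<Longrightarrow> relu (a / s) = relu a / s"
  by (auto simp: relu_def max_def divide_le_0_iff)

lemma relu_sub_relu_uminus: "relu a - relu (- a) = a"
  by (simp add: relu_def max_def)

locale shallow_relu_net =
  fixes m1 r k :: nat and p :: real and c b :: "nat \<Rightarrow> real" and w :: "nat \<Rightarrow> nat \<Rightarrow> real"
  assumes p_ge_1: "p \<ge> 1" and k_ge_1: "k \<ge> 1"
    and unit_l1: "\<And>i. i < r \<Longrightarrow> \<bar>b i\<bar> + (\<Sum>j<m1. \<bar>w i j\<bar>) = 1"
begin

definition n :: nat where
  "n = nat \<lceil>real r / real k\<rceil>"

definition W :: nat where
  "W = n + 2 * m1 + 3"

lemma W_pos: "W > 0"
  by (simp add: W_def)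

definition preact :: "nat \<Rightarrow> (nat \<Rightarrow> real) \<Rightarrow> real" where
  "preact i x = (\<Sum>j<m1. w i j * x j) + b i"

text \<open>Block 0 reads x itself, so its weight columns can be normalised to unit p-norm exactly. Later
  blocks read x through relu x and relu (- x), which costs a factor 2.\<close>

definition scale :: "nat \<Rightarrow> real" where
  "scale i = (if i < n then (\<Sum>l<Suc m1. \<bar>case_nat (b i) (w i) l\<bar> powr p) powr (1 / p) else 2)"

definition neuron :: "nat \<Rightarrow> (nat \<Rightarrow> real) \<Rightarrow> real" where
  "neuron i x = (if i < r then relu (preact i x) / scale i else 0)"

definition c_pos :: "nat \<Rightarrow> real" where
  "c_pos i = max (c i) 0"

definition c_neg :: "nat \<Rightarrow> real" where
  "c_neg i = max (- c i) 0"

definition block_weight :: "(nat \<Rightarrow> real) \<Rightarrow> nat \<Rightarrow> nat \<Rightarrow> real" where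
  "block_weight a M t = (if M * n + t < r then scale (M * n + t) * a (M * n + t) else 0)"

definition mass :: "(nat \<Rightarrow> real) \<Rightarrow> nat \<Rightarrow> real" where
  "mass a M = (\<Sum>i<M * n. if i < r then scale i * a i else 0)"

definition acc :: "(nat \<Rightarrow> real) \<Rightarrow> nat \<Rightarrow> (nat \<Rightarrow> real) \<Rightarrow> real" where
  "acc a M x = (\<Sum>i<M * n. if i < r then a i * relu (preact i x) else 0)"

definition avg :: "(nat \<Rightarrow> real) \<Rightarrow> nat \<Rightarrow> (nat \<Rightarrow> real) \<Rightarrow> real" where
  "avg a M x = acc a M x / mass a M"

lemma block_cover: "r \<le> k * n"
proof -
  have "real r / real k \<le> real n"
    unfolding n_def by (simp add: le_of_int_ceiling)
  then have "real r \<le> real k * real n"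
    using k_ge_1 by (simp add: divide_le_eq mult.commute)
  then show ?thesis by (simp flip: of_nat_mult)
qed

lemma sum_abs_coeffs: "i < r \<Longrightarrow> (\<Sum>l<Suc m1. \<bar>case_nat (b i) (w i) l\<bar>) = 1"
  using unit_l1 by (simp add: sum.lessThan_Suc_shift del: sum.lessThan_Suc)

lemma scale_pos: assumes "i < r" shows "scale i > 0"
proof (cases "i < n")
  case True
  have "\<not> (\<forall>l<Suc m1. case_nat (b i) (w i) l = 0)"
    using sum_abs_coeffs[OF assms] by (metis (no_types, lifting) abs_zero lessThan_iff sum.neutral zero_neq_one)
  then obtain l where "l < Suc m1" "case_nat (b i) (w i) l \<noteq> 0" by blast
  then have "0 < (\<Sum>l<Suc m1. \<bar>case_nat (b i) (w i) l\<bar> powr p)"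
    by (intro sum_pos2[of _ l]) auto
  then show ?thesis using True by (simp add: scale_def)
qed (simp add: scale_def)

lemma scale_le_2: assumes "i < r" shows "scale i \<le> 2"
proof (cases "i < n")
  case True
  have "(\<Sum>l<Suc m1. \<bar>case_nat (b i) (w i) l\<bar> powr p) powr (1 / p) \<le> 1"
    using powr_sum_abs_powr_le_sum_abs[OF p_ge_1, of "{..<Suc m1}" "case_nat (b i) (w i)"] sum_abs_coeffs[OF assms]
    by (simp del: sum.lessThan_Suc)
  then show ?thesis using True by (simp add: scale_def)
qed (simp add: scale_def)

lemma scale_nonneg: "scale i \<ge> 0"
  by (simp add: scale_def)

lemma sum_lessThan_Suc_mult_split:
  "(\<Sum>i<Suc M * n. f i) = (\<Sum>i<M * n. f i) + (\<Sum>t<n. f (M * n + t) :: real)"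
  using sum_lessThan_add_split[of f "M * n" n] by (simp add: add.commute)

lemma mass_Suc: "mass a (Suc M) = mass a M + (\<Sum>t<n. block_weight a M t)"
  unfolding mass_def block_weight_def by (rule sum_lessThan_Suc_mult_split)

lemma acc_Suc: "acc a (Suc M) x = acc a M x + (\<Sum>t<n. block_weight a M t * neuron (M * n + t) x)"
proof -
  have "(if i < r then a i * relu (preact i x) else 0) = (if i < r then scale i * a i else 0) * neuron i x" for i
    using scale_pos[of i] by (auto simp: neuron_def)
  then show ?thesis
    unfolding acc_def block_weight_def sum_lessThan_Suc_mult_split
    by (simp del: mult_zero_left cong: if_cong)
qed

lemma c_pos_nonneg: "c_pos i \<ge> 0" and c_neg_nonneg: "c_neg i \<ge> 0"
  by (simp_all add: c_pos_def c_neg_def)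

lemma block_weight_nonneg: "(\<And>i. a i \<ge> 0) \<Longrightarrow> block_weight a M t \<ge> 0"
  by (simp add: block_weight_def scale_nonneg)

lemma mass_nonneg: "(\<And>i. a i \<ge> 0) \<Longrightarrow> mass a M \<ge> 0"
  by (simp add: mass_def scale_nonneg sum_nonneg)

lemma avg_nonneg: "(\<And>i. a i \<ge> 0) \<Longrightarrow> avg a M x \<ge> 0"
  unfolding avg_def acc_def by (intro divide_nonneg_nonneg mass_nonneg sum_nonneg) (simp_all add: relu_nonneg)

lemma mass_mult_avg:
  assumes "\<And>i. a i \<ge> 0"
  shows "mass a M * avg a M x = acc a M x"
proof (cases "mass a M = 0")
  case True
  have "\<forall>i\<in>{..<M * n}. (if i < r then scale i * a i else 0) = 0"
    using True assms unfolding mass_def by (subst sum_nonneg_eq_0_iff[symmetric]) (simp_all add: scale_nonneg)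
  then have "\<forall>i<M * n. i < r \<longrightarrow> a i = 0"
    using scale_pos by (metis lessThan_iff mult_eq_0_iff order_less_irrefl)
  then have "acc a M x = 0" unfolding acc_def by (intro sum.neutral) auto
  then show ?thesis using True by simp
qed (simp add: avg_def)

lemma mass_pos_add_neg: "mass c_pos M + mass c_neg M = (\<Sum>i<M * n. if i < r then scale i * \<bar>c i\<bar> else 0)"
  unfolding mass_def sum.distrib[symmetric] by (intro sum.cong) (auto simp: c_pos_def c_neg_def max_def)

lemma acc_pos_sub_neg: "acc c_pos M x - acc c_neg M x = (\<Sum>i<M * n. if i < r then c i * relu (preact i x) else 0)"
  unfolding acc_def sum_subtractf[symmetric] by (intro sum.cong) (auto simp: c_pos_def c_neg_def max_def)

definition state :: "nat \<Rightarrow> (nat \<Rightarrow> real) \<Rightarrow> nat \<Rightarrow> real" where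
  "state L x j =
     (if j < n then neuron ((L - 1) * n + j) x
      else if j < n + m1 then relu (x (j - n))
      else if j < n + 2 * m1 then relu (- x (j - n - m1))
      else if j = n + 2 * m1 then avg c_pos (L - 1) x
      else if j = n + 2 * m1 + 1 then avg c_neg (L - 1) x
      else 0)"

lemma state_nonneg: "state L x j \<ge> 0"
  by (simp add: state_def neuron_def relu_nonneg avg_nonneg c_pos_nonneg c_neg_nonneg
      scale_nonneg divide_nonneg_nonneg)

lemma state_beyond: "W - 1 \<le> j \<Longrightarrow> state L x j = 0"
  by (simp add: state_def W_def)

text \<open>A column [(0, -1)] is a dead neuron: it outputs relu (- 1) = 0 whatever the input.\<close>

definition input_column :: "nat \<Rightarrow> (nat \<times> real) list" where
  "input_column j =
     (if n \<le> j \<and> j < n + m1 then [(Suc (j - n), 1)]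
      else if n + m1 \<le> j \<and> j < n + 2 * m1 then [(Suc (j - n - m1), -1)]
      else [(0, -1)])"

definition input_layer :: "nat \<Rightarrow> nat \<Rightarrow> real" where
  "input_layer i j =
     (if j < n \<and> j < r then case_nat (b j) (w j) i / scale j
      else sparse_vector (input_column j) i)"

lemma input_layer_state:
  assumes "j < W"
  shows "relu (affine_map input_layer m1 W x j) = state 1 x j"
proof (cases "j < n \<and> j < r")
  case True
  have "affine_map input_layer m1 W x j = (\<Sum>l<Suc m1. case_nat (b j) (w j) l * case_nat 1 x l) / scale j"
    using assms True by (simp add: affine_map_eq_sum input_layer_def sum_divide_distrib del: sum.lessThan_Suc)
  also have "\<dots> = preact j x / scale j"
    by (simp add: sum.lessThan_Suc_shift preact_def del: sum.lessThan_Suc)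
  finally show ?thesis
    using True scale_pos[of j] by (simp add: relu_divide state_def neuron_def)
next
  case False
  then have "input_layer i j = sparse_vector (input_column j) i" for i
    by (subst input_layer_def) (rule if_not_P)
  then have "affine_map input_layer m1 W x j = (\<Sum>i<Suc m1. sparse_vector (input_column j) i * case_nat 1 x i)"
    using assms by (simp add: affine_map_eq_sum del: sum.lessThan_Suc)
  also have "\<dots> = (\<Sum>(l, a) \<leftarrow> input_column j. a * case_nat 1 x l)"
    by (rule sum_sparse_vector_mult) (simp add: input_column_def, linarith)
  finally show ?thesis
    using assms False by (auto simp: input_column_def state_def neuron_def relu_def W_def avg_def acc_def)
qed

lemma input_layer_unit_columns:
  assumes "j < W"
  shows "(\<Sum>i<Suc m1. \<bar>input_layer i j\<bar> powr p) = 1"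
proof (cases "j < n \<and> j < r")
  case True
  define S where "S = (\<Sum>i<Suc m1. \<bar>case_nat (b j) (w j) i\<bar> powr p)"
  have "scale j powr p = S"
    using True p_ge_1 by (simp add: scale_def S_def powr_powr sum_nonneg del: sum.lessThan_Suc)
  then have "\<bar>input_layer i j\<bar> powr p = \<bar>case_nat (b j) (w j) i\<bar> powr p / S" for i
    using True scale_pos[of j] by (simp add: input_layer_def abs_divide powr_divide)
  moreover have "S > 0"
    using \<open>scale j powr p = S\<close> scale_pos[of j] True by auto
  ultimately show ?thesis
    by (simp add: sum_divide_distrib[symmetric] S_def del: sum.lessThan_Suc)
next
  case False
  then have "input_layer i j = sparse_vector (input_column j) i" for i
    by (subst input_layer_def) (rule if_not_P)
  moreover have "\<exists>l a. input_column j = [(l, a)] \<and> l < Suc m1 \<and> \<bar>a\<bar> = 1"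
    by (simp add: input_column_def, linarith)
  ultimately show ?thesis
    using p_ge_1 by (auto simp: sum_abs_powr_single_sparse_vector simp del: sum.lessThan_Suc sparse_vector_simps)
qed

text \<open>x t is read off the pass-through neurons as relu (x t) - relu (- x t); halving the weights
  keeps the l1-norm of the column at most 1.\<close>

definition block_column :: "nat \<Rightarrow> (nat \<times> real) list" where
  "block_column i =
     (0, b i / 2) # map (\<lambda>t. (Suc (n + t), w i t / 2)) [0..<m1]
       @ map (\<lambda>t. (Suc (n + m1 + t), - w i t / 2)) [0..<m1]"

definition avg_column :: "(nat \<Rightarrow> real) \<Rightarrow> nat \<Rightarrow> nat \<Rightarrow> (nat \<times> real) list" where
  "avg_column a M j =
     (Suc j, mass a M / mass a (Suc M)) # map (\<lambda>t. (Suc t, block_weight a M t / mass a (Suc M))) [0..<n]"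

definition hidden_column :: "nat \<Rightarrow> nat \<Rightarrow> (nat \<times> real) list" where
  "hidden_column m j =
     (if j < n \<and> m * n + j < r then block_column (m * n + j)
      else if n \<le> j \<and> j < n + 2 * m1 then [(Suc j, 1)]
      else if j = n + 2 * m1 then avg_column c_pos (m - 1) j
      else if j = n + 2 * m1 + 1 then avg_column c_neg (m - 1) j
      else [(0, -1)])"

text \<open>Neuron W - 1 is identically 0, so its input row is free to pad each column to unit p-norm.\<close>

definition hidden_layer :: "nat \<Rightarrow> nat \<Rightarrow> nat \<Rightarrow> real" where
  "hidden_layer m i j = unit_pad p W (sparse_vector (hidden_column m j)) i"

lemma block_column_l1: "i < r \<Longrightarrow> (\<Sum>(l, a) \<leftarrow> block_column i. \<bar>a\<bar>) \<le> 1"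
  using unit_l1[of i]
  by (simp add: block_column_def o_def sum_list_map_upt_eq_sum sum_divide_distrib[symmetric])

lemma avg_column_l1:
  assumes "\<And>i. a i \<ge> 0"
  shows "(\<Sum>(l, e) \<leftarrow> avg_column a M j. \<bar>e\<bar>) \<le> 1"
proof -
  have "(\<Sum>(l, e) \<leftarrow> avg_column a M j. \<bar>e\<bar>) = (mass a M + (\<Sum>t<n. block_weight a M t)) / mass a (Suc M)"
    using assms
    by (simp add: avg_column_def o_def sum_list_map_upt_eq_sum mass_nonneg block_weight_nonneg
        abs_of_nonneg add_divide_distrib sum_divide_distrib)
  then show ?thesis by (simp add: mass_Suc)
qed

lemma hidden_column_l1: "(\<Sum>(l, a) \<leftarrow> hidden_column m j. \<bar>a\<bar>) \<le> 1"
  using block_column_l1 avg_column_l1 c_pos_nonneg c_neg_nonneg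
  by (simp add: hidden_column_def)

lemma hidden_column_positions:
  assumes "j < W"
  shows "\<forall>(l, a) \<in> set (hidden_column m j). l < W"
  using assms by (auto simp: hidden_column_def block_column_def avg_column_def W_def)

lemma affine_map_hidden_layer:
  assumes "j < W" and "v (W - 1) = 0"
  shows "affine_map (hidden_layer m) W W v j = (\<Sum>(l, a) \<leftarrow> hidden_column m j. a * case_nat 1 v l)"
proof -
  have "case_nat 1 v W = v (W - 1)" by (simp add: W_def eval_nat_numeral)
  then show ?thesis
    using assms sum_sparse_vector_mult[OF hidden_column_positions[OF assms(1)]]
    by (simp add: affine_map_eq_sum hidden_layer_def sum_unit_pad_mult del: sum.lessThan_Suc)
qed

lemma hidden_layer_unit_columns: "(\<Sum>i<Suc W. \<bar>hidden_layer m i j\<bar> powr p) = 1"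
  unfolding hidden_layer_def
  using p_ge_1 order.trans[OF sum_abs_sparse_vector_le hidden_column_l1]
  by (rule sum_abs_powr_unit_pad)

lemma block_column_value:
  "(\<Sum>(l, a) \<leftarrow> block_column i. a * case_nat 1 (state L x) l) = preact i x / 2"
proof -
  have "(\<Sum>t<m1. w i t / 2 * relu (x t)) + (\<Sum>t<m1. - w i t / 2 * relu (- x t)) = (\<Sum>t<m1. w i t * x t) / 2"
    unfolding sum_divide_distrib sum.distrib[symmetric]
  proof (intro sum.cong refl)
    fix t
    have "w i t / 2 * relu (x t) + - w i t / 2 * relu (- x t) = w i t * (relu (x t) - relu (- x t)) / 2"
      by (simp add: algebra_simps)
    then show "w i t / 2 * relu (x t) + - w i t / 2 * relu (- x t) = w i t * x t / 2"
      by (simp add: relu_sub_relu_uminus)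
  qed
  then show ?thesis
    by (simp add: block_column_def o_def sum_list_map_upt_eq_sum state_def preact_def add_divide_distrib)
qed

lemma avg_column_value:
  assumes "\<And>i. a i \<ge> 0" and "v j = avg a M x" and "\<And>t. t < n \<Longrightarrow> v t = neuron (M * n + t) x"
  shows "(\<Sum>(l, e) \<leftarrow> avg_column a M j. e * case_nat 1 v l) = avg a (Suc M) x"
proof -
  have "(\<Sum>(l, e) \<leftarrow> avg_column a M j. e * case_nat 1 v l)
      = (mass a M * avg a M x + (\<Sum>t<n. block_weight a M t * neuron (M * n + t) x)) / mass a (Suc M)"
    using assms(2,3) by (simp add: avg_column_def o_def sum_list_map_upt_eq_sum add_divide_distrib sum_divide_distrib)
  also have "\<dots> = acc a (Suc M) x / mass a (Suc M)"
    by (simp only: mass_mult_avg[OF assms(1)] acc_Suc)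
  also have "\<dots> = avg a (Suc M) x"
    by (simp add: avg_def)
  finally show ?thesis .
qed

lemma hidden_layer_state:
  assumes "j < W" and "m \<ge> 1"
  shows "relu (affine_map (hidden_layer m) W W (state m x) j) = state (Suc m) x j"
proof -
  have avg_slot: "(\<Sum>(l, e) \<leftarrow> avg_column a (m - 1) j. e * case_nat 1 (state m x) l) = avg a m x"
    if "\<And>i. a i \<ge> 0" and "state m x j = avg a (m - 1) x" for a
    using avg_column_value[of a "state m x" j "m - 1" x] that assms(2) by (simp add: state_def)
  consider "j < n" "m * n + j < r" | "j < n" "\<not> m * n + j < r" | "n \<le> j" "j < n + 2 * m1"
    | "j = n + 2 * m1" | "j = n + 2 * m1 + 1" | "n + 2 * m1 + 1 < j"
    by linarith
  then have "relu (\<Sum>(l, a) \<leftarrow> hidden_column m j. a * case_nat 1 (state m x) l) = state (Suc m) x j"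
  proof cases
    case 1
    have "n \<le> m * n + j"
      using assms(2) by (metis le_add1 mult_1 mult_le_mono1 order_trans)
    then have "scale (m * n + j) = 2" by (simp add: scale_def)
    then show ?thesis
      using 1 by (simp add: hidden_column_def block_column_value relu_divide state_def neuron_def)
  next
    case 3
    then show ?thesis
      using state_nonneg[of m x j] by (simp add: hidden_column_def relu_of_nonneg state_def)
  next
    case 4
    then show ?thesis
      using avg_slot[of c_pos] c_pos_nonneg avg_nonneg[of c_pos]
      by (simp add: hidden_column_def relu_of_nonneg state_def)
  next
    case 5
    then show ?thesis
      using avg_slot[of c_neg] c_neg_nonneg avg_nonneg[of c_neg]
      by (simp add: hidden_column_def relu_of_nonneg state_def)
  qed (simp_all add: hidden_column_def state_def neuron_def relu_def)
  moreover have "state m x (W - 1) = 0" by (simp add: state_beyond)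
  ultimately show ?thesis
    using assms(1) by (simp add: affine_map_hidden_layer)
qed

definition output_column :: "(nat \<times> real) list" where
  "output_column =
     map (\<lambda>t. (Suc t, block_weight c_pos (k - 1) t - block_weight c_neg (k - 1) t)) [0..<n]
     @ [(Suc (n + 2 * m1), mass c_pos (k - 1)), (Suc (n + 2 * m1 + 1), - mass c_neg (k - 1))]"

definition output_layer :: "nat \<Rightarrow> nat \<Rightarrow> real" where
  "output_layer i j = sparse_vector output_column i"

lemma output_layer_value: "affine_map output_layer W 1 (state k x) 0 = (\<Sum>i<r. c i * relu (preact i x))"
proof -
  obtain K where Suc_K: "Suc K = k" using k_ge_1 by (cases k) auto
  then have K: "k - 1 = K" "k - Suc 0 = K" by auto
  have "affine_map output_layer W 1 (state k x) 0 = (\<Sum>i<Suc W. sparse_vector output_column i * case_nat 1 (state k x) i)"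
    by (simp add: affine_map_eq_sum output_layer_def del: sum.lessThan_Suc sparse_vector_simps)
  also have "\<dots> = (\<Sum>(l, a) \<leftarrow> output_column. a * case_nat 1 (state k x) l)"
    by (rule sum_sparse_vector_mult) (auto simp: output_column_def W_def)
  also have "\<dots> = (mass c_pos K * avg c_pos K x + (\<Sum>t<n. block_weight c_pos K t * neuron (K * n + t) x))
      - (mass c_neg K * avg c_neg K x + (\<Sum>t<n. block_weight c_neg K t * neuron (K * n + t) x))"
    by (simp add: output_column_def o_def sum_list_map_upt_eq_sum state_def K left_diff_distrib
        sum_subtractf)
  also have "\<dots> = acc c_pos (Suc K) x - acc c_neg (Suc K) x"
    by (simp only: mass_mult_avg c_pos_nonneg c_neg_nonneg acc_Suc)
  also have "\<dots> = (\<Sum>i<r. c i * relu (preact i x))"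
    unfolding Suc_K by (simp add: acc_pos_sub_neg sum_lessThan_if_less block_cover)
  finally show ?thesis .
qed

lemma output_column_l1: "(\<Sum>(l, a) \<leftarrow> output_column. \<bar>a\<bar>) \<le> 2 * (\<Sum>i<r. \<bar>c i\<bar>)"
proof -
  obtain K where Suc_K: "Suc K = k" using k_ge_1 by (cases k) auto
  then have K: "k - 1 = K" "k - Suc 0 = K" by auto
  have "\<bar>block_weight c_pos K t - block_weight c_neg K t\<bar> \<le> block_weight c_pos K t + block_weight c_neg K t" for t
    using block_weight_nonneg[of c_pos K t, OF c_pos_nonneg] block_weight_nonneg[of c_neg K t, OF c_neg_nonneg]
    by linarith
  then have "(\<Sum>(l, a) \<leftarrow> output_column. \<bar>a\<bar>)
      \<le> (mass c_pos K + (\<Sum>t<n. block_weight c_pos K t)) + (mass c_neg K + (\<Sum>t<n. block_weight c_neg K t))"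
    using mass_nonneg[of c_pos K] mass_nonneg[of c_neg K] c_pos_nonneg c_neg_nonneg
    by (simp add: output_column_def o_def sum_list_map_upt_eq_sum K sum_mono flip: sum.distrib)
  also have "\<dots> = (\<Sum>i<r. scale i * \<bar>c i\<bar>)"
    unfolding mass_Suc[symmetric] Suc_K by (simp add: mass_pos_add_neg sum_lessThan_if_less block_cover)
  also have "\<dots> \<le> (\<Sum>i<r. 2 * \<bar>c i\<bar>)"
    by (intro sum_mono mult_right_mono scale_le_2) auto
  finally show ?thesis by (simp add: sum_distrib_left)
qed

definition layers :: "nat \<Rightarrow> nat \<Rightarrow> nat \<Rightarrow> real" where
  "layers L = (if L = 1 then input_layer else if L \<le> k then hidden_layer (L - 1) else output_layer)"

definition widths :: "nat \<Rightarrow> nat" where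
  "widths i = (if i = 0 then m1 else if i \<le> k then W else 1)"

lemma hidden_layers_state: "1 \<le> L \<Longrightarrow> L \<le> k \<Longrightarrow> hidden layers widths L x = state L x"
proof (induction L)
  case (Suc L)
  have "relu (affine_map (layers (Suc L)) (widths L) W (hidden layers widths L x) j) = state (Suc L) x j" for j
  proof (cases "j < W")
    case True
    show ?thesis
    proof (cases "L = 0")
      case True
      then show ?thesis using \<open>j < W\<close> input_layer_state by (simp add: layers_def widths_def)
    next
      case False
      then have "hidden layers widths L x = state L x" using Suc by simp
      then show ?thesis
        using False \<open>j < W\<close> Suc.prems hidden_layer_state[of j L x] by (simp add: layers_def widths_def)
    qed
  qed (simp add: affine_map_def relu_def state_beyond)
  moreover have "widths (Suc L) = W" using Suc.prems by (simp add: widths_def)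
  ultimately show ?case by (simp add: fun_eq_iff)
qed simp

lemma network_mem_NN:
  assumes "1 \<le> q"
    and "\<And>x. g x = (\<Sum>i<r. c i * relu ((\<Sum>j<m1. w i j * x j) + b i))"
    and "(\<Sum>i<r. \<bar>c i\<bar>) \<le> co"
  shows "(\<lambda>x j. g x) \<in> NN k widths p q (pow_inv_q (real W) q) (2 * co)"
  unfolding NN_def
proof (intro CollectI exI[of _ layers] conjI ballI allI impI)
  fix L assume "L \<in> {1..k}"
  then have "widths L = W"
    and "widths (L - 1) + 1 = (if L = 1 then Suc m1 else Suc W)"
    and "layers L = (if L = 1 then input_layer else hidden_layer (L - 1))"
    by (auto simp: widths_def layers_def)
  then show "pq_norm p q (widths (L - 1) + 1) (widths L) (layers L) = pow_inv_q (real W) q"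
    by (cases "L = 1")
      (auto intro!: pq_norm_unit_columns input_layer_unit_columns hidden_layer_unit_columns simp: W_pos)
next
  have "pq_norm p q (widths k + 1) (widths (Suc k)) (layers (Suc k)) = pq_norm p q (Suc W) 1 output_layer"
    using k_ge_1 by (simp add: layers_def widths_def)
  also have "\<dots> \<le> (\<Sum>(l, a) \<leftarrow> output_column. \<bar>a\<bar>)"
    using pq_norm_single_column_le[OF p_ge_1 assms(1)] sum_abs_sparse_vector_le
    unfolding output_layer_def by (rule order.trans)
  also have "\<dots> \<le> 2 * co"
    using output_column_l1 assms(3) by linarith
  finally show "pq_norm p q (widths k + 1) (widths (Suc k)) (layers (Suc k)) \<le> 2 * co" .
next
  fix x :: "nat \<Rightarrow> real" and j
  assume "j < widths (Suc k)"
  then show "g x = net_eval layers widths k x j"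
    using k_ge_1 hidden_layers_state[of k x] output_layer_value assms(2)
    by (simp add: net_eval_def layers_def widths_def preact_def)
qed

end

theorem lemma1:
  fixes m1 r k :: nat and p co :: real and q :: ereal
    and c b :: "nat \<Rightarrow> real" and w :: "nat \<Rightarrow> nat \<Rightarrow> real"
    and g :: "(nat \<Rightarrow> real) \<Rightarrow> real"
  assumes "m1 \<ge> 1" and "r \<ge> 1"
    and "1 \<le> p" and "1 \<le> q" and "co > 0"
    and "\<And>x. g x = (\<Sum>i<r. c i * relu ((\<Sum>j<m1. w i j * x j) + b i))"
    and "(\<Sum>i<r. \<bar>c i\<bar>) \<le> co"
    and "\<And>i. i < r \<Longrightarrow> \<bar>b i\<bar> + (\<Sum>j<m1. \<bar>w i j\<bar>) = 1"
    and "1 \<le> k" and "k \<le> r"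
  shows "(\<lambda>x j. g x) \<in>
           NN k (\<lambda>i. if i = 0 then m1 else if i \<le> k then nat \<lceil>real r / real k\<rceil> + 2 * m1 + 3 else 1)
              p q (pow_inv_q (real (nat \<lceil>real r / real k\<rceil> + 2 * m1 + 3)) q) (2 * co)"
proof -
  interpret shallow_relu_net m1 r k p c b w
    using assms by unfold_locales auto
  show ?thesis
    using network_mem_NN[OF assms(4,6,7)] unfolding widths_def[abs_def] W_def n_def .
qed

end
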